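(* Let $\mathcal{B}$ be a homothecy invariant density basis consisting of rectangular parallelepipeds in $\mathbb{R}^n$ and let $\alpha\in(0,1)$. Then for all $\delta\in(0,1-\alpha)$, \[ C_{\mathcal{B}}(\alpha)\le C_{\mathcal{B}}\Big(\alpha\big(1+\tfrac{\delta}{2^n}\big)\Big)\,C_{\mathcal{B}}(1-\delta). \]
   Context: A basis $\mathcal B$ is a collection of bounded open sets in $\mathbb R^n$; it is homothecy invariant if every translate and every positive dilate of a member of $\mathcal B$ belongs to $\mathcal B$. For locally integrable $f$, $M_{\mathcal B}f(x)=\sup_{x\in R\in\mathcal B}\frac{1}{|R|}\int_R|f|$ if $x\in\bigcup_{B\in\mathcal B}B$ and $0$ otherwise. $\mathcal B$ is a density basis if for every $f\in L^\infty(\mathbb R^n)$, for a.e. $x$, $\frac{1}{|R|}\int_R f\to f(x)$ as $R$ ranges over members of $\mathcal B$ containing $x$ with diameter tending to $0$. The halo set is $\mathcal H_{\mathcal B,\beta}(E)=\{x: M_{\mathcal B}\chi_E(x)>\beta\}$, and the sharp Tauberian constant is $C_{\mathcal B}(\beta)=\sup_{E:\,0<|E|<\infty}\frac{|\mathcal H_{\mathcal B,\beta}(E)|}{|E|}$ for $\beta\in(0,1)$. *)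

theory Defs
  imports "HOL-Analysis.Analysis"
begin

definition rect_parallelepiped :: "'a::euclidean_space set \<Rightarrow> bool" where
  "rect_parallelepiped R \<longleftrightarrow>
     (\<exists>(u::'a \<Rightarrow> 'a) a b. (\<forall>i\<in>Basis. \<forall>j\<in>Basis. u i \<bullet> u j = (if i = j then 1 else 0))
            \<and> (\<forall>i\<in>Basis. a i < (b i :: real))
            \<and> R = {x. \<forall>i\<in>Basis. a i < x \<bullet> u i \<and> x \<bullet> u i < b i})"

definition is_basis :: "'a::euclidean_space set set \<Rightarrow> bool" where
  "is_basis \<B> \<longleftrightarrow> (\<forall>R\<in>\<B>. bounded R \<and> open R)"

definition homothecy_invariant :: "'a::euclidean_space set set \<Rightarrow> bool" where
  "homothecy_invariant \<B> \<longleftrightarrow>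
     (\<forall>R\<in>\<B>. \<forall>t. \<forall>r::real. r > 0 \<longrightarrow> ((\<lambda>x. t + r *\<^sub>R x) ` R) \<in> \<B>)"

definition max_op :: "'a::euclidean_space set set \<Rightarrow> ('a \<Rightarrow> real) \<Rightarrow> 'a \<Rightarrow> ennreal" where
  "max_op \<B> f x =
     (if x \<in> \<Union>\<B>
      then (SUP R\<in>{R\<in>\<B>. x \<in> R}.
              (\<integral>\<^sup>+ y. ennreal \<bar>f y\<bar> * indicator R y \<partial>lebesgue) / emeasure lebesgue R)
      else 0)"

definition density_basis :: "'a::euclidean_space set set \<Rightarrow> bool" where
  "density_basis \<B> \<longleftrightarrow>
     (\<forall>f::'a \<Rightarrow> real. f \<in> borel_measurable lebesgue \<and>
        (\<exists>C. AE x in lebesgue. \<bar>f x\<bar> \<le> C) \<longrightarrow>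
        (AE x in lebesgue. \<forall>e>0. \<exists>d>0. \<forall>R\<in>\<B>. x \<in> R \<and> diameter R < d \<longrightarrow>
            \<bar>(\<integral>y. indicator R y * f y \<partial>lebesgue) / measure lebesgue R - f x\<bar> < e))"

definition halo :: "'a::euclidean_space set set \<Rightarrow> real \<Rightarrow> 'a set \<Rightarrow> 'a set" where
  "halo \<B> \<beta> E = {x. max_op \<B> (indicator E) x > ennreal \<beta>}"

definition tauberian_const :: "'a::euclidean_space set set \<Rightarrow> real \<Rightarrow> ennreal" where
  "tauberian_const \<B> \<beta> =
     (SUP E\<in>{E\<in>sets lebesgue. 0 < emeasure lebesgue E \<and> emeasure lebesgue E < \<infinity>}.
        emeasure lebesgue (halo \<B> \<beta> E) / emeasure lebesgue E)"

end

theory Submission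
  imports Defs
begin

(* The corollary follows from the halo inclusion
        halo \<alpha> E \<subseteq> halo (\<alpha>(1 + \<delta>/2^n)) (halo (1-\<delta>) E)                  (1)
   by composing the Tauberian estimates |halo \<beta> F| \<le> C(\<beta>) |F| (tauberian_const_compose).
   To prove (1), take a rectangle R of the basis witnessing x \<in> halo \<alpha> E.  If E fills more
   than 1-\<delta> of R, then R lies in H = halo (1-\<delta>) E.  Otherwise run a Calderon-Zygmund
   stopping time on the dyadic subboxes of R (homothetic copies of R, hence in the basis):
   by the density basis property the maximal subboxes where E has density > 1-\<delta> cover
   E \<inter> R almost everywhere, and every stop gains H-measure \<ge> \<delta>|box|/2^n outside E, found by
   continuously growing the heavy child until it becomes light.  Summing over the stops
   gives (1 + \<delta>/2^n)|E \<inter> R| \<le> |H \<inter> R|, which is (1). *)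

section \<open>Halo sets of a basis\<close>

lemma basis_fmeasurable:
  assumes "is_basis B" "R \<in> B"
  shows "R \<in> fmeasurable lebesgue"
  using assms lmeasurable_open unfolding is_basis_def by blast

lemma ennreal_less_average_iff:
  assumes R: "R \<in> fmeasurable lebesgue" and E: "E \<in> sets lebesgue" and beta: "\<beta> \<ge> 0"
  shows "ennreal \<beta> < emeasure lebesgue (E \<inter> R) / emeasure lebesgue R
     \<longleftrightarrow> \<beta> * measure lebesgue R < measure lebesgue (E \<inter> R)"
proof -
  have ER: "E \<inter> R \<in> fmeasurable lebesgue"
    using R E by (metis fmeasurable_Int_fmeasurable inf_commute)
  have le: "measure lebesgue (E \<inter> R) \<le> measure lebesgue R"
    using R ER by (intro measure_mono_fmeasurable) auto
  show ?thesis
  proof (cases "measure lebesgue R = 0")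
    case True
    then have "measure lebesgue (E \<inter> R) = 0" using le by (simp add: antisym)
    then show ?thesis
      using True R ER by (simp add: emeasure_eq_measure2)
  next
    case False
    then have pos: "measure lebesgue R > 0" by (simp add: order_less_le)
    have "emeasure lebesgue (E \<inter> R) / emeasure lebesgue R
        = ennreal (measure lebesgue (E \<inter> R) / measure lebesgue R)"
      using pos R ER by (simp add: emeasure_eq_measure2 divide_ennreal)
    then show ?thesis using pos beta
      by (simp add: ennreal_less_iff pos_less_divide_eq mult.commute)
  qed
qed

lemma halo_iff:
  assumes B: "is_basis B" and E: "E \<in> sets lebesgue" and beta: "\<beta> \<ge> 0"
  shows "x \<in> halo B \<beta> E \<longleftrightarrow> (\<exists>R\<in>B. x \<in> R \<and> \<beta> * measure lebesgue R < measure lebesgue (E \<inter> R))"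
proof (cases "x \<in> \<Union>B")
  case True
  have avg: "(\<integral>\<^sup>+ y. ennreal \<bar>indicator E y\<bar> * indicator R y \<partial>lebesgue) = emeasure lebesgue (E \<inter> R)"
    if "R \<in> B" for R
  proof -
    have "(\<integral>\<^sup>+ y. ennreal \<bar>indicator E y\<bar> * indicator R y \<partial>lebesgue)
        = (\<integral>\<^sup>+ y. indicator (E \<inter> R) y \<partial>lebesgue)"
      by (intro nn_integral_cong) (auto simp: indicator_def)
    then show ?thesis
      using basis_fmeasurable[OF B that] E by auto
  qed
  have "max_op B (indicator E) x
      = (SUP R\<in>{R\<in>B. x \<in> R}. emeasure lebesgue (E \<inter> R) / emeasure lebesgue R)"
    unfolding max_op_def using True avg by (simp only: if_True) (rule SUP_cong, auto)
  then have "x \<in> halo B \<beta> E \<longleftrightarrow>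
      (\<exists>R\<in>{R\<in>B. x \<in> R}. ennreal \<beta> < emeasure lebesgue (E \<inter> R) / emeasure lebesgue R)"
    unfolding halo_def by (simp add: less_SUP_iff)
  also have "\<dots> \<longleftrightarrow> (\<exists>R\<in>B. x \<in> R \<and> \<beta> * measure lebesgue R < measure lebesgue (E \<inter> R))"
    using ennreal_less_average_iff[OF basis_fmeasurable[OF B] E beta] by auto
  finally show ?thesis .
next
  case False
  then show ?thesis unfolding halo_def max_op_def by auto
qed

lemma halo_sets:
  assumes "is_basis B" "E \<in> sets lebesgue" "\<beta> \<ge> 0"
  shows "halo B \<beta> E \<in> sets lebesgue"
proof -
  have "halo B \<beta> E = \<Union>{R\<in>B. \<beta> * measure lebesgue R < measure lebesgue (E \<inter> R)}"
    using halo_iff[OF assms] by auto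
  then have "open (halo B \<beta> E)"
    using assms(1) unfolding is_basis_def by auto
  then show ?thesis by simp
qed

lemma halo_null:
  assumes B: "is_basis B" and H: "H \<in> null_sets lebesgue" and beta: "\<beta> \<ge> 0"
  shows "halo B \<beta> H = {}"
proof -
  have "measure lebesgue (H \<inter> R) = 0" if "R \<in> B" for R
    using H basis_fmeasurable[OF B that] by (simp add: measure_eq_0_null_sets null_set_Int2)
  moreover have "0 \<le> \<beta> * measure lebesgue R" for R
    using beta by simp
  ultimately show ?thesis
    using halo_iff[OF B null_setsD2[OF H] beta] by (metis equals0I leD)
qed

section \<open>Composition of Tauberian estimates\<close>

lemma halo_ratio_le_tauberian_const:
  assumes "E \<in> sets lebesgue" "0 < emeasure lebesgue E" "emeasure lebesgue E < \<infinity>"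
  shows "emeasure lebesgue (halo B \<beta> E) / emeasure lebesgue E \<le> tauberian_const B \<beta>"
  unfolding tauberian_const_def using assms by (intro SUP_upper) auto

lemma emeasure_halo_le_tauberian_const:
  assumes "E \<in> sets lebesgue" "0 < emeasure lebesgue E" "emeasure lebesgue E < \<infinity>"
  shows "emeasure lebesgue (halo B \<beta> E) \<le> tauberian_const B \<beta> * emeasure lebesgue E"
proof -
  have "emeasure lebesgue (halo B \<beta> E)
      = emeasure lebesgue (halo B \<beta> E) / emeasure lebesgue E * emeasure lebesgue E"
    using assms by (simp add: ennreal_divide_times)
  also have "\<dots> \<le> tauberian_const B \<beta> * emeasure lebesgue E"
    using halo_ratio_le_tauberian_const[OF assms] by (rule mult_right_mono) simp
  finally show ?thesis .
qed

text \<open>A basis set R of positive measure is contained in its own halo at level \<beta> < 1,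
  so the Tauberian constant is at least 1.\<close>
lemma one_le_tauberian_const:
  assumes B: "is_basis B" and R: "R \<in> B" "0 < measure lebesgue R" and beta: "0 \<le> \<beta>" "\<beta> < 1"
  shows "1 \<le> tauberian_const B \<beta>"
proof -
  have Rf: "R \<in> fmeasurable lebesgue" using basis_fmeasurable[OF B R(1)] .
  have "\<beta> * measure lebesgue R < measure lebesgue (R \<inter> R)"
    using R(2) beta by simp
  then have "R \<subseteq> halo B \<beta> R"
    using halo_iff[OF B fmeasurableD[OF Rf] beta(1)] R(1) by blast
  then have "emeasure lebesgue R \<le> emeasure lebesgue (halo B \<beta> R)"
    using halo_sets[OF B fmeasurableD[OF Rf] beta(1)] by (intro emeasure_mono)
  then have "emeasure lebesgue R / emeasure lebesgue R \<le> emeasure lebesgue (halo B \<beta> R) / emeasure lebesgue R"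
    by (rule divide_right_mono_ennreal)
  moreover have "emeasure lebesgue R / emeasure lebesgue R = 1"
    using R(2) Rf by (simp add: emeasure_eq_measure2 divide_ennreal)
  moreover have "0 < emeasure lebesgue R" "emeasure lebesgue R < \<infinity>"
    using R(2) Rf by (auto simp: emeasure_eq_measure2)
  ultimately show ?thesis
    using halo_ratio_le_tauberian_const[OF fmeasurableD[OF Rf]] order_trans by metis
qed

text \<open>The Tauberian estimate extended to all measurable sets, provided C(\<beta>) \<ge> 1: sets of
  measure zero have empty halo, and sets of infinite measure are trivial.\<close>
lemma emeasure_halo_le_tauberian_const_general:
  assumes B: "is_basis B" and H: "H \<in> sets lebesgue" and beta: "\<beta> \<ge> 0"
    and C: "1 \<le> tauberian_const B \<beta>"
  shows "emeasure lebesgue (halo B \<beta> H) \<le> tauberian_const B \<beta> * emeasure lebesgue H"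
proof -
  consider "emeasure lebesgue H = 0" | "emeasure lebesgue H = \<infinity>"
    | "0 < emeasure lebesgue H" "emeasure lebesgue H < \<infinity>"
    by (cases "emeasure lebesgue H = 0"; cases "emeasure lebesgue H = \<infinity>")
       (auto simp: less_top zero_less_iff_neq_zero)
  then show ?thesis
  proof cases
    case 1
    then show ?thesis using halo_null[OF B _ beta] H by (simp add: null_setsI)
  next
    case 2
    moreover have "tauberian_const B \<beta> \<noteq> 0" using C by auto
    ultimately show ?thesis by (simp add: ennreal_mult_top)
  next
    case 3
    then show ?thesis using emeasure_halo_le_tauberian_const[OF H] by blast
  qed
qed

lemma tauberian_const_compose:
  fixes B :: "'a::euclidean_space set set"
  assumes B: "is_basis B" and pos: "\<forall>R\<in>B. 0 < measure lebesgue R"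
    and a: "0 \<le> a" "a < 1" and b: "0 \<le> b"
    and incl: "\<And>E. E \<in> sets lebesgue \<Longrightarrow> halo B \<alpha> E \<subseteq> halo B a (halo B b E)"
  shows "tauberian_const B \<alpha> \<le> tauberian_const B a * tauberian_const B b"
  unfolding tauberian_const_def[of B \<alpha>]
proof (rule SUP_least, clarify)
  fix E :: "'a set"
  assume E: "E \<in> sets lebesgue" "0 < emeasure lebesgue E" "emeasure lebesgue E < \<infinity>"
  let ?H = "halo B b E"
  have H: "?H \<in> sets lebesgue" using halo_sets[OF B E(1) b] .
  have "emeasure lebesgue (halo B \<alpha> E) \<le> tauberian_const B a * tauberian_const B b * emeasure lebesgue E"
  proof (cases "B = {}")
    case True
    then show ?thesis by (simp add: halo_def max_op_def)
  next
    case False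
    then obtain R where "R \<in> B" by blast
    then have Ca: "1 \<le> tauberian_const B a"
      using one_le_tauberian_const[OF B] pos a by blast
    have "emeasure lebesgue (halo B \<alpha> E) \<le> emeasure lebesgue (halo B a ?H)"
      using incl[OF E(1)] halo_sets[OF B H a(1)] by (rule emeasure_mono)
    also have "\<dots> \<le> tauberian_const B a * emeasure lebesgue ?H"
      using emeasure_halo_le_tauberian_const_general[OF B H a(1) Ca] .
    also have "\<dots> \<le> tauberian_const B a * (tauberian_const B b * emeasure lebesgue E)"
      using emeasure_halo_le_tauberian_const[OF E] by (rule mult_left_mono) simp
    finally show ?thesis by (simp add: ac_simps)
  qed
  then show "emeasure lebesgue (halo B \<alpha> E) / emeasure lebesgue E \<le> tauberian_const B a * tauberian_const B b"
    using E by (intro divide_le_posI_ennreal) (simp_all add: ac_simps)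
qed

section \<open>Subboxes of a rectangle of the basis\<close>

text \<open>In the
  normalised coordinates coord x i it becomes the unit cube; subbox p s is the cube with
  corner p and side s in these coordinates, a homothetic copy of the rectangle.\<close>
locale rect_frame =
  fixes B :: "'a::euclidean_space set set" and u :: "'a \<Rightarrow> 'a" and a b :: "'a \<Rightarrow> real"
  assumes ortho: "\<forall>i\<in>Basis. \<forall>j\<in>Basis. u i \<bullet> u j = (if i = j then 1 else 0)"
    and a_less_b: "\<forall>i\<in>Basis. a i < b i"
    and is_basis: "is_basis B" and homothecy: "homothecy_invariant B"
    and rect_in_B: "{x. \<forall>i\<in>Basis. a i < x \<bullet> u i \<and> x \<bullet> u i < b i} \<in> B"
begin

definition coord :: "'a \<Rightarrow> 'a \<Rightarrow> real" where
  "coord x i = (x \<bullet> u i - a i) / (b i - a i)"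

definition subbox :: "('a \<Rightarrow> real) \<Rightarrow> real \<Rightarrow> 'a set" where
  "subbox p s = {x. \<forall>i\<in>Basis. p i < coord x i \<and> coord x i < p i + s}"

abbreviation unit_box :: "'a set" where
  "unit_box \<equiv> subbox (\<lambda>_. 0) 1"

text \<open>The translation part of the homothecy mapping the unit box onto subbox p s.\<close>
definition offset :: "('a \<Rightarrow> real) \<Rightarrow> real \<Rightarrow> 'a" where
  "offset p s = (\<Sum>i\<in>Basis. (a i * (1 - s) + p i * (b i - a i)) *\<^sub>R u i)"

lemma coord_homothecy:
  assumes i: "i \<in> Basis"
  shows "coord (offset p s + s *\<^sub>R x) i = p i + s * coord x i"
proof -
  have "offset p s \<bullet> u i = (\<Sum>j\<in>Basis. (a j * (1 - s) + p j * (b j - a j)) * (u j \<bullet> u i))"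
    by (simp add: offset_def inner_sum_left)
  also have "\<dots> = (\<Sum>j\<in>Basis. if j = i then a j * (1 - s) + p j * (b j - a j) else 0)"
    using ortho i by (intro sum.cong) auto
  also have "\<dots> = a i * (1 - s) + p i * (b i - a i)"
    using i by simp
  finally have "(offset p s + s *\<^sub>R x) \<bullet> u i - a i = p i * (b i - a i) + s * (x \<bullet> u i - a i)"
    by (simp add: inner_add_left algebra_simps)
  moreover have "b i - a i \<noteq> 0" using a_less_b i by force
  ultimately show ?thesis by (simp add: coord_def add_divide_distrib)
qed

lemma unit_box_eq: "{x. \<forall>i\<in>Basis. a i < x \<bullet> u i \<and> x \<bullet> u i < b i} = unit_box"
  using a_less_b by (auto simp: subbox_def coord_def field_simps)

lemma subbox_homothetic:
  assumes s: "s > 0"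
  shows "subbox p s = (\<lambda>x. s *\<^sub>R x + offset p s) ` unit_box"
proof
  show "subbox p s \<subseteq> (\<lambda>x. s *\<^sub>R x + offset p s) ` unit_box"
  proof
    fix y assume y: "y \<in> subbox p s"
    define x where "x = (1/s) *\<^sub>R (y - offset p s)"
    have yx: "y = offset p s + s *\<^sub>R x" using s by (simp add: x_def)
    have "x \<in> unit_box"
      using y s unfolding subbox_def by (auto simp: yx coord_homothecy zero_less_mult_iff)
    then show "y \<in> (\<lambda>x. s *\<^sub>R x + offset p s) ` unit_box" using yx by (auto simp: add.commute)
  qed
next
  show "(\<lambda>x. s *\<^sub>R x + offset p s) ` unit_box \<subseteq> subbox p s"
    using s by (auto simp: subbox_def add.commute[of _ "offset p s"] coord_homothecy)
qed

lemma subbox_in_B: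
  assumes s: "s > 0"
  shows "subbox p s \<in> B"
proof -
  have "(\<lambda>x. offset p s + s *\<^sub>R x) ` unit_box \<in> B"
    using homothecy rect_in_B s unfolding homothecy_invariant_def unit_box_eq by blast
  then show ?thesis using subbox_homothetic[OF s, of p] by (simp add: add.commute)
qed

lemma subbox_open_bounded:
  assumes "s > 0"
  shows "open (subbox p s)" "bounded (subbox p s)"
  using subbox_in_B[OF assms] is_basis unfolding is_basis_def by blast+

lemma subbox_fmeasurable: "s > 0 \<Longrightarrow> subbox p s \<in> fmeasurable lebesgue"
  using basis_fmeasurable[OF is_basis subbox_in_B] .

lemma measure_subbox: "s > 0 \<Longrightarrow> measure lebesgue (subbox p s) = s ^ DIM('a) * measure lebesgue unit_box"
  using measure_lebesgue_affine[of s "offset p s" unit_box] subbox_homothetic[of s p] by simp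

text \<open>The unit box is a nonempty open set (it contains its centre), so its volume is positive.\<close>
lemma measure_unit_box_pos: "measure lebesgue unit_box > 0"
proof -
  have center: "coord (offset (\<lambda>_. 1/2) 0) i = 1/2" if "i \<in> Basis" for i
    using coord_homothecy[OF that, of "\<lambda>_. 1/2" 0 0] by simp
  have "offset (\<lambda>_. 1/2) 0 \<in> unit_box"
    unfolding subbox_def by (simp add: center)
  moreover have "open unit_box"
    using subbox_open_bounded(1)[OF zero_less_one] .
  ultimately obtain e where e: "e > 0" "ball (offset (\<lambda>_. 1/2) 0) e \<subseteq> unit_box"
    using open_contains_ball by blast
  have "0 < measure lebesgue (ball (offset (\<lambda>_. 1/2) 0) e)"
    using content_ball_pos[OF e(1)] by (simp add: measure_completion)
  also have "\<dots> \<le> measure lebesgue unit_box"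
    using e subbox_fmeasurable[of 1] by (intro measure_mono_fmeasurable) auto
  finally show ?thesis .
qed

lemma measure_subbox_pos:
  assumes "s > 0"
  shows "measure lebesgue (subbox p s) > 0"
  using measure_subbox[OF assms, of p] measure_unit_box_pos assms by simp

lemma diameter_subbox:
  assumes s: "s > 0"
  shows "diameter (subbox p s) \<le> s * diameter unit_box"
proof (rule diameter_le)
  have "bounded unit_box"
    using subbox_open_bounded(2)[OF zero_less_one] .
  then show "subbox p s \<noteq> {} \<or> 0 \<le> s * diameter unit_box"
    using s diameter_ge_0[OF \<open>bounded unit_box\<close>] by simp
  fix x y assume "x \<in> subbox p s" "y \<in> subbox p s"
  then obtain x' y' where x'y': "x' \<in> unit_box" "y' \<in> unit_box"
    "x = s *\<^sub>R x' + offset p s" "y = s *\<^sub>R y' + offset p s"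
    using subbox_homothetic[OF s, of p] by auto
  have "norm (x - y) = s * dist x' y'"
    using s by (simp add: x'y' dist_norm scaleR_diff_right[symmetric])
  also have "\<dots> \<le> s * diameter unit_box"
    using s diameter_bounded_bound[OF \<open>bounded unit_box\<close> x'y'(1,2)] by (intro mult_left_mono) auto
  finally show "norm (x - y) \<le> s * diameter unit_box" .
qed

text \<open>The 2^n dyadic children of subbox p s, indexed by the set J of directions in which
  the child occupies the upper half.\<close>
definition child :: "('a \<Rightarrow> real) \<Rightarrow> real \<Rightarrow> 'a set \<Rightarrow> ('a \<Rightarrow> real)" where
  "child p s J = (\<lambda>i. p i + (if i \<in> J then s/2 else 0))"

lemma child_subset:
  assumes "s > 0"
  shows "subbox (child p s J) (s/2) \<subseteq> subbox p s"
proof -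
  have "p i \<le> child p s J i" "child p s J i + s/2 \<le> p i + s" for i
    using assms unfolding child_def by auto
  then show ?thesis
    unfolding subbox_def by (smt (verit) Collect_mono)
qed

lemma children_disjoint:
  assumes "J \<subseteq> Basis" "J' \<subseteq> Basis" "J \<noteq> J'"
  shows "subbox (child p s J) (s/2) \<inter> subbox (child p s J') (s/2) = {}"
proof -
  obtain i where "i \<in> Basis" "(i \<in> J \<and> i \<notin> J') \<or> (i \<notin> J \<and> i \<in> J')"
    using assms by blast
  then have "child p s J i + s/2 \<le> child p s J' i \<or> child p s J' i + s/2 \<le> child p s J i"
    unfolding child_def by auto
  then show ?thesis
    using \<open>i \<in> Basis\<close> unfolding subbox_def by fastforce
qed

lemma sum_children_measure_le:
  assumes F: "F \<in> sets lebesgue" and s: "s > 0"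
  shows "(\<Sum>J\<in>Pow Basis. measure lebesgue (F \<inter> subbox (child p s J) (s/2)))
           \<le> measure lebesgue (F \<inter> subbox p s)"
proof -
  have fm: "F \<inter> subbox q r \<in> fmeasurable lebesgue" if "r > 0" for q r
    using fmeasurable_Int_fmeasurable[OF subbox_fmeasurable[OF that] F] by (simp add: Int_commute)
  have s2: "s/2 > 0" using s by simp
  have "(\<Sum>J\<in>Pow Basis. measure lebesgue (F \<inter> subbox (child p s J) (s/2)))
      = measure lebesgue (\<Union>J\<in>Pow Basis. F \<inter> subbox (child p s J) (s/2))"
  proof (rule measure_finite_Union[symmetric])
    show "(\<lambda>J. F \<inter> subbox (child p s J) (s/2)) ` Pow Basis \<subseteq> sets lebesgue"
      using fm[OF s2] by (auto dest: fmeasurableD)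
    show "disjoint_family_on (\<lambda>J. F \<inter> subbox (child p s J) (s/2)) (Pow Basis)"
      unfolding disjoint_family_on_def using children_disjoint by blast
    show "emeasure lebesgue (F \<inter> subbox (child p s J) (s/2)) \<noteq> \<infinity>" for J
      using fmeasurableD2[OF fm[OF s2]] by simp
  qed simp
  also have "\<dots> \<le> measure lebesgue (F \<inter> subbox p s)"
  proof (rule measure_mono_fmeasurable[OF _ _ fm[OF s]])
    show "(\<Union>J\<in>Pow Basis. F \<inter> subbox (child p s J) (s/2)) \<subseteq> F \<inter> subbox p s"
      using child_subset[OF s] by blast
    show "(\<Union>J\<in>Pow Basis. F \<inter> subbox (child p s J) (s/2)) \<in> sets lebesgue"
      using fm[OF s2] by (intro sets.finite_UN) (auto dest: fmeasurableD)
  qed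
  finally show ?thesis .
qed

text \<open>A child grown homothetically from its outer corner by the factor r \<in> [1,2]; at r = 2
  it fills the parent.\<close>
definition grown_child :: "('a \<Rightarrow> real) \<Rightarrow> real \<Rightarrow> 'a set \<Rightarrow> real \<Rightarrow> 'a set" where
  "grown_child p s J r = subbox (\<lambda>i. if i \<in> J then p i + s - r * s / 2 else p i) (r * s / 2)"

lemma grown_child_mono:
  assumes "s > 0" "r \<le> r'"
  shows "grown_child p s J r \<subseteq> grown_child p s J r'"
proof -
  have "r * s / 2 \<le> r' * s / 2" using assms by (simp add: mult_right_mono)
  then show ?thesis
    unfolding grown_child_def subbox_def by (smt (verit) Collect_mono)
qed

lemma grown_child_1: "grown_child p s J 1 = subbox (child p s J) (s/2)"
proof -
  have "(\<lambda>i. if i \<in> J then p i + s - 1 * s / 2 else p i) = child p s J"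
    by (auto simp: child_def)
  then show ?thesis unfolding grown_child_def by simp
qed

lemma grown_child_2: "grown_child p s J 2 = subbox p s"
proof -
  have "(\<lambda>i. if i \<in> J then p i + s - 2 * s / 2 else p i) = p"
    by auto
  then show ?thesis unfolding grown_child_def by simp
qed

fun dyadic_desc :: "nat \<Rightarrow> ('a \<Rightarrow> real) \<Rightarrow> real \<Rightarrow> (('a \<Rightarrow> real) \<times> real) set" where
  "dyadic_desc 0 p s = {(p, s)}"
| "dyadic_desc (Suc k) p s = (\<Union>J\<in>Pow Basis. dyadic_desc k (child p s J) (s/2))"

lemma dyadic_desc_side: "(q, r) \<in> dyadic_desc k p s \<Longrightarrow> r = s / 2^k"
proof (induction k arbitrary: p s)
  case (Suc k)
  then obtain J where "(q, r) \<in> dyadic_desc k (child p s J) (s/2)" by auto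
  then show ?case using Suc.IH[of "child p s J" "s/2"] by simp
qed simp

lemma dyadic_desc_subset:
  "(q, r) \<in> dyadic_desc k p s \<Longrightarrow> s > 0 \<Longrightarrow> subbox q r \<subseteq> subbox p s"
proof (induction k arbitrary: p s)
  case (Suc k)
  then obtain J where "(q, r) \<in> dyadic_desc k (child p s J) (s/2)" by auto
  then show ?case
    using Suc.IH[of "child p s J" "s/2"] Suc.prems child_subset[of s p J] by auto
qed simp

lemma dyadic_desc_cover:
  assumes "x \<in> subbox p s" "s \<in> \<rat>" "\<forall>i\<in>Basis. p i \<in> \<rat>" "\<forall>i\<in>Basis. coord x i \<notin> \<rat>"
  shows "\<exists>(q, r)\<in>dyadic_desc k p s. x \<in> subbox q r"
  using assms
proof (induction k arbitrary: p s)
  case 0 then show ?case by auto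
next
  case (Suc k)
  define J where "J = {i\<in>Basis. p i + s/2 < coord x i}"
  have "coord x i \<noteq> p i + s/2" if "i \<in> Basis" for i
    using Suc.prems that by (metis Rats_add Rats_divide Rats_number_of)
  then have "child p s J i < coord x i \<and> coord x i < child p s J i + s/2" if "i \<in> Basis" for i
    using Suc.prems(1) that unfolding subbox_def child_def J_def by fastforce
  then have "x \<in> subbox (child p s J) (s/2)"
    unfolding subbox_def by blast
  moreover have "\<forall>i\<in>Basis. child p s J i \<in> \<rat>" "s/2 \<in> \<rat>"
    using Suc.prems unfolding child_def by auto
  ultimately obtain q r where "(q, r) \<in> dyadic_desc k (child p s J) (s/2)" "x \<in> subbox q r"
    using Suc.IH[of "child p s J" "s/2"] Suc.prems by blast
  moreover have "J \<in> Pow Basis" by (auto simp: J_def)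
  ultimately show ?case by auto
qed

text \<open>The points having some rational coordinate form a countable union of hyperplanes.\<close>
lemma rational_coord_null: "{x. \<exists>i\<in>Basis. coord x i \<in> \<rat>} \<in> null_sets lebesgue"
proof -
  have eq: "{x. \<exists>i\<in>Basis. coord x i \<in> \<rat>}
      = (\<Union>(i, q)\<in>Basis \<times> \<rat>. {x. u i \<bullet> x = a i + q * (b i - a i)})"
  proof -
    have iff: "coord x i = q \<longleftrightarrow> u i \<bullet> x = a i + q * (b i - a i)" if "i \<in> Basis" for x i q
      using a_less_b that by (force simp: coord_def inner_commute field_simps)
    show ?thesis
    proof (intro set_eqI iffI)
      fix x assume "x \<in> {x. \<exists>i\<in>Basis. coord x i \<in> \<rat>}"
      then obtain i where "i \<in> Basis" "coord x i \<in> \<rat>" by blast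
      then show "x \<in> (\<Union>(i, q)\<in>Basis \<times> \<rat>. {x. u i \<bullet> x = a i + q * (b i - a i)})"
        using iff[of i x "coord x i"] by blast
    next
      fix x assume "x \<in> (\<Union>(i, q)\<in>Basis \<times> \<rat>. {x. u i \<bullet> x = a i + q * (b i - a i)})"
      then obtain i q where "i \<in> Basis" "q \<in> \<rat>" "u i \<bullet> x = a i + q * (b i - a i)" by blast
      then show "x \<in> {x. \<exists>i\<in>Basis. coord x i \<in> \<rat>}"
        using iff[of i x q] by blast
    qed
  qed
  have "u i \<noteq> 0" if "i \<in> Basis" for i
    using ortho that by force
  then have "{x. u i \<bullet> x = c} \<in> null_sets lebesgue" if "i \<in> Basis" for i c
    using negligible_hyperplane that negligible_iff_null_sets by blast
  moreover have "countable (Basis \<times> (\<rat> :: real set))"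
    using countable_rat by (intro countable_SIGMA) (auto intro: countable_finite)
  ultimately show ?thesis
    unfolding eq by (intro null_sets_UN') auto
qed

end

section \<open>Growing a heavy set until it becomes light\<close>

lemma measure_Int_Diff_split:
  assumes "A \<in> fmeasurable lebesgue" "E \<in> sets lebesgue"
  shows "measure lebesgue A = measure lebesgue (A \<inter> E) + measure lebesgue (A - E)"
proof -
  have "A - A \<inter> E = A - E" by blast
  moreover have "A \<inter> E \<in> sets lebesgue" using assms by (auto dest: fmeasurableD)
  ultimately show ?thesis
    using measurable_measure_Diff[of A lebesgue "A \<inter> E"] assms by simp
qed

text \<open>For an increasing family of sets whose measure is continuous in the parameter, the
  measure of the part inside a fixed set E is continuous too: it grows by at most as much.\<close>
lemma continuous_on_measure_Int:
  fixes Q :: "real \<Rightarrow> 'a::euclidean_space set"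
  assumes Qf: "\<And>r. r \<in> {c..d} \<Longrightarrow> Q r \<in> fmeasurable lebesgue"
    and mono: "\<And>r r'. r \<in> {c..d} \<Longrightarrow> r' \<in> {c..d} \<Longrightarrow> r \<le> r' \<Longrightarrow> Q r \<subseteq> Q r'"
    and cont: "continuous_on {c..d} (\<lambda>r. measure lebesgue (Q r))"
    and E: "E \<in> sets lebesgue"
  shows "continuous_on {c..d} (\<lambda>r. measure lebesgue (E \<inter> Q r))"
proof -
  define h where "h r = measure lebesgue (Q r)" for r
  define g where "g r = measure lebesgue (E \<inter> Q r)" for r
  have EQf: "E \<inter> Q r \<in> fmeasurable lebesgue" if "r \<in> {c..d}" for r
    using fmeasurable_Int_fmeasurable[OF Qf[OF that] E] by (simp add: Int_commute)
  have lip: "\<bar>g r' - g r\<bar> \<le> \<bar>h r' - h r\<bar>" if r: "r \<in> {c..d}" "r' \<in> {c..d}" "r \<le> r'" for r r'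
  proof -
    have sub: "Q r \<subseteq> Q r'" using mono[OF r] .
    have "g r \<le> g r'"
      unfolding g_def using sub EQf[OF r(1)] EQf[OF r(2)] by (intro measure_mono_fmeasurable) auto
    moreover have "g r' \<le> g r + measure lebesgue (Q r' - Q r)"
    proof -
      have "(E \<inter> Q r) \<union> (Q r' - Q r) \<in> fmeasurable lebesgue"
        using sub fmeasurableD[OF EQf[OF r(1)]] fmeasurableD[OF Qf[OF r(1)]] fmeasurableD[OF Qf[OF r(2)]]
        by (intro fmeasurableI2[OF Qf[OF r(2)]]) auto
      then have "g r' \<le> measure lebesgue ((E \<inter> Q r) \<union> (Q r' - Q r))"
        unfolding g_def using EQf[OF r(2)] by (intro measure_mono_fmeasurable) auto
      also have "\<dots> \<le> g r + measure lebesgue (Q r' - Q r)"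
        unfolding g_def using EQf[OF r(1)] Qf[OF r(1)] Qf[OF r(2)]
        by (intro measure_Un_le) auto
      finally show ?thesis .
    qed
    moreover have "measure lebesgue (Q r' - Q r) = h r' - h r"
      unfolding h_def using sub Qf[OF r(2)] Qf[OF r(1)] by (simp add: measurable_measure_Diff)
    ultimately show ?thesis by linarith
  qed
  show ?thesis
    unfolding continuous_on_iff g_def[symmetric]
  proof (intro ballI allI impI)
    fix x e :: real assume x: "x \<in> {c..d}" and e: "e > 0"
    obtain t where t: "t > 0" "\<forall>x'\<in>{c..d}. dist x' x < t \<longrightarrow> dist (h x') (h x) < e"
      using cont x e unfolding continuous_on_iff h_def by blast
    have "dist (g x') (g x) < e" if "x' \<in> {c..d}" "dist x' x < t" for x'
    proof -
      have "\<bar>g x' - g x\<bar> \<le> \<bar>h x' - h x\<bar>"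
        using lip[of x x'] lip[of x' x] that x by (cases "x \<le> x'") (auto simp: abs_minus_commute)
      moreover have "\<bar>h x' - h x\<bar> < e" using t(2) that by (simp add: dist_real_def)
      ultimately show ?thesis by (simp add: dist_real_def)
    qed
    then show "\<exists>t>0. \<forall>x'\<in>{c..d}. dist x' x < t \<longrightarrow> dist (g x') (g x) < e"
      using t(1) by blast
  qed
qed

lemma first_nonpositive_point:
  fixes f :: "real \<Rightarrow> real"
  assumes cont: "continuous_on {c..d} f" and "c \<le> d" and fc: "f c > 0" and fd: "f d \<le> 0"
  obtains z where "z \<in> {c<..d}" "f z \<le> 0" "\<And>r. r \<in> {c<..<z} \<Longrightarrow> f r > 0"
proof -
  define Z where "Z = {r \<in> {c..d}. f r \<le> 0}"
  have "closed Z"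
    unfolding Z_def using cont by (intro continuous_on_closed_Collect_le) auto
  moreover have "d \<in> Z" "bdd_below Z"
    using assms unfolding Z_def by (auto intro: bdd_belowI[of _ c])
  ultimately have z: "Inf Z \<in> Z"
    using closed_contains_Inf by blast
  have "Inf Z \<noteq> c" using z fc unfolding Z_def by auto
  then have "Inf Z \<in> {c<..d}" using z unfolding Z_def by auto
  moreover have "f r > 0" if "r \<in> {c<..<Inf Z}" for r
    using cInf_lower[OF _ \<open>bdd_below Z\<close>, of r] that z unfolding Z_def by force
  ultimately show ?thesis using that z unfolding Z_def by blast
qed

text \<open>At the first
  light member Q z the set H covers Q z up to measure zero while E covers at most the fraction
  1-\<delta>, so H - E has measure \<ge> \<delta>|Q z| \<ge> \<delta>|Q 1| inside Q 2.\<close>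
lemma halo_gain_growing_family:
  fixes Q :: "real \<Rightarrow> 'a::euclidean_space set"
  assumes Qf: "\<And>r. r \<in> {1..2} \<Longrightarrow> Q r \<in> fmeasurable lebesgue"
    and mono: "\<And>r r'. r \<in> {1..2} \<Longrightarrow> r' \<in> {1..2} \<Longrightarrow> r \<le> r' \<Longrightarrow> Q r \<subseteq> Q r'"
    and cont: "continuous_on {1..2} (\<lambda>r. measure lebesgue (Q r))"
    and E: "E \<in> sets lebesgue" and H: "H \<in> sets lebesgue" and \<delta>: "0 \<le> \<delta>"
    and heavy_1: "(1 - \<delta>) * measure lebesgue (Q 1) < measure lebesgue (E \<inter> Q 1)"
    and light_2: "measure lebesgue (E \<inter> Q 2) \<le> (1 - \<delta>) * measure lebesgue (Q 2)"
    and heavy_in_H: "\<And>r. r \<in> {1..2} \<Longrightarrow>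
           (1 - \<delta>) * measure lebesgue (Q r) < measure lebesgue (E \<inter> Q r) \<Longrightarrow> Q r \<subseteq> H"
  shows "\<delta> * measure lebesgue (Q 1) \<le> measure lebesgue (H \<inter> Q 2 - E)"
proof -
  define h where "h r = measure lebesgue (Q r)" for r
  define f where "f r = measure lebesgue (E \<inter> Q r) - (1 - \<delta>) * h r" for r
  have "continuous_on {1..2} f"
    unfolding f_def h_def
    using continuous_on_measure_Int[OF Qf mono cont E] cont by (intro continuous_intros)
  moreover have "f 1 > 0" "f 2 \<le> 0"
    using heavy_1 light_2 unfolding f_def h_def by auto
  ultimately obtain z where z: "z \<in> {1<..2}" "f z \<le> 0" and heavy: "\<And>r. r \<in> {1<..<z} \<Longrightarrow> f r > 0"
    using first_nonpositive_point[of 1 2 f] by auto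
  have HQf: "H \<inter> Q z \<in> fmeasurable lebesgue"
    using fmeasurable_Int_fmeasurable[OF Qf H, of z] z by (simp add: Int_commute)
  have below: "h r \<le> measure lebesgue (H \<inter> Q z)" if r: "r \<in> {1<..<z}" for r
  proof -
    have "Q r \<subseteq> H"
      using heavy[OF r] heavy_in_H[of r] r z unfolding f_def h_def by auto
    then have "Q r \<subseteq> H \<inter> Q z" using mono[of r z] r z by auto
    then show ?thesis
      unfolding h_def using HQf fmeasurableD[OF Qf[of r]] r z by (intro measure_mono_fmeasurable) auto
  qed
  have "h z \<le> measure lebesgue (H \<inter> Q z)"
  proof (rule tendsto_upperbound)
    have "continuous_on {1..z} h"
      using continuous_on_subset[OF cont] z unfolding h_def by auto
    then show "(h \<longlongrightarrow> h z) (at_left z)"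
      using z by (intro continuous_on_Icc_at_leftD) auto
    show "\<forall>\<^sub>F r in at_left z. h r \<le> measure lebesgue (H \<inter> Q z)"
      using eventually_at_left_real[of 1 z] z below by (auto elim!: eventually_mono)
  qed (simp add: trivial_limit_at_left_real)
  moreover have "measure lebesgue (H \<inter> Q z \<inter> E) \<le> measure lebesgue (E \<inter> Q z)"
  proof (rule measure_mono_fmeasurable)
    show "E \<inter> Q z \<in> fmeasurable lebesgue"
      using fmeasurable_Int_fmeasurable[OF Qf E, of z] z by (simp add: Int_commute)
  qed (use HQf E in auto)
  moreover have "measure lebesgue (H \<inter> Q z) = measure lebesgue (H \<inter> Q z \<inter> E) + measure lebesgue (H \<inter> Q z - E)"
    using measure_Int_Diff_split[OF HQf E] .
  ultimately have "\<delta> * h z \<le> measure lebesgue (H \<inter> Q z - E)"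
    using z(2) unfolding f_def by (simp add: algebra_simps)
  moreover have "h 1 \<le> h z"
    unfolding h_def using mono[of 1 z] Qf[of z] fmeasurableD[OF Qf[of 1]] z
    by (intro measure_mono_fmeasurable) auto
  moreover have "measure lebesgue (H \<inter> Q z - E) \<le> measure lebesgue (H \<inter> Q 2 - E)"
  proof (rule measure_mono_fmeasurable)
    show "H \<inter> Q 2 - E \<in> fmeasurable lebesgue"
      using fmeasurable_Int_fmeasurable[OF Qf H, of 2] E by (intro fmeasurable_Diff) (auto simp: Int_commute)
  qed (use mono[of z 2] z HQf E in auto)
  ultimately show ?thesis
    unfolding h_def by (smt (verit) \<delta> mult_left_mono)
qed

section \<open>The stopping time\<close>

text \<open>A subbox is heavy if E occupies more than the fraction 1-\<delta> of it; heavy subboxes lie in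
  the halo H.  stop_set k p s is the union of the maximal heavy dyadic descendants of
  subbox p s down to generation k.\<close>
locale stopping_time = rect_frame +
  fixes E :: "'a set" and \<delta> :: real
  assumes E: "E \<in> sets lebesgue" and \<delta>: "0 < \<delta>" "\<delta> < 1"
begin

abbreviation H :: "'a set" where
  "H \<equiv> halo B (1 - \<delta>) E"

lemma H_sets: "H \<in> sets lebesgue"
  using halo_sets[OF is_basis E] \<delta> by simp

lemma H_Int_subbox_fmeasurable: "s > 0 \<Longrightarrow> H \<inter> subbox p s \<in> fmeasurable lebesgue"
  using fmeasurable_Int_fmeasurable[OF subbox_fmeasurable H_sets] by (simp add: Int_commute)

definition heavy :: "('a \<Rightarrow> real) \<Rightarrow> real \<Rightarrow> bool" where
  "heavy p s \<longleftrightarrow> (1 - \<delta>) * measure lebesgue (subbox p s) < measure lebesgue (E \<inter> subbox p s)"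

lemma heavy_subset_H: "s > 0 \<Longrightarrow> heavy p s \<Longrightarrow> subbox p s \<subseteq> H"
  using halo_iff[OF is_basis E, of "1 - \<delta>"] \<delta> subbox_in_B unfolding heavy_def by auto

fun stop_set :: "nat \<Rightarrow> ('a \<Rightarrow> real) \<Rightarrow> real \<Rightarrow> 'a set" where
  "stop_set 0 p s = {}"
| "stop_set (Suc k) p s = (\<Union>J\<in>Pow Basis.
     if heavy (child p s J) (s/2) then subbox (child p s J) (s/2) else stop_set k (child p s J) (s/2))"

declare stop_set.simps(2) [simp del]

lemma stop_set_subset: "s > 0 \<Longrightarrow> stop_set k p s \<subseteq> subbox p s \<inter> H"
proof (induction k arbitrary: p s)
  case (Suc k)
  have "(if heavy (child p s J) (s/2) then subbox (child p s J) (s/2) else stop_set k (child p s J) (s/2))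
     \<subseteq> subbox p s \<inter> H" for J
    using Suc.IH[of "s/2" "child p s J"] child_subset[of s p J] heavy_subset_H[of "s/2" "child p s J"] Suc.prems
    by auto
  then show ?case by (simp only: stop_set.simps) (intro UN_least; blast)
qed simp

lemma stop_set_sets: "s > 0 \<Longrightarrow> stop_set k p s \<in> sets lebesgue"
proof (induction k arbitrary: p s)
  case (Suc k)
  have "(if heavy (child p s J) (s/2) then subbox (child p s J) (s/2) else stop_set k (child p s J) (s/2))
     \<in> sets lebesgue" for J
    using Suc fmeasurableD[OF subbox_fmeasurable[of "s/2"]] by auto
  then show ?case by (simp only: stop_set.simps) (intro sets.finite_UN; simp)
qed simp

lemma stop_set_incseq: "incseq (\<lambda>k. stop_set k p s)"
proof -
  have "stop_set k p s \<subseteq> stop_set (Suc k) p s" for k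
  proof (induction k arbitrary: p s)
    case (Suc k)
    have "(if heavy (child p s J) (s/2) then subbox (child p s J) (s/2) else stop_set k (child p s J) (s/2))
       \<subseteq> (if heavy (child p s J) (s/2) then subbox (child p s J) (s/2) else stop_set (Suc k) (child p s J) (s/2))"
      for J
      using Suc.IH[of "child p s J" "s/2"] by simp
    then show ?case
      unfolding stop_set.simps(2)[of "Suc k" p s] stop_set.simps(2)[of k p s] by (rule UN_mono[OF order_refl])
  qed simp
  then show ?thesis by (simp add: incseq_SucI)
qed

lemma heavy_desc_in_stop_set:
  assumes "(q, r) \<in> dyadic_desc k p s" "s > 0" "x \<in> subbox q r" "heavy q r" "\<not> heavy p s"
  shows "x \<in> stop_set k p s"
  using assms
proof (induction k arbitrary: p s)
  case (Suc k)
  then obtain J where J: "J \<in> Pow Basis" "(q, r) \<in> dyadic_desc k (child p s J) (s/2)" by auto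
  show ?case
  proof (cases "heavy (child p s J) (s/2)")
    case True
    then show ?thesis
      using J dyadic_desc_subset[OF J(2)] Suc.prems by (auto simp: stop_set.simps)
  next
    case False
    then show ?thesis using Suc.IH[OF J(2)] Suc.prems J(1) by (auto simp: stop_set.simps)
  qed
qed simp

text \<open>The child is grown continuously
  towards the whole box until it becomes light.\<close>
lemma halo_gain:
  assumes s: "s > 0" and light: "\<not> heavy p s" and heavy_child: "heavy (child p s J) (s/2)"
  shows "\<delta> * (measure lebesgue (subbox p s) / 2 ^ DIM('a)) \<le> measure lebesgue (H \<inter> subbox p s - E)"
proof -
  let ?Q = "grown_child p s J"
  have pos: "r * s / 2 > 0" if "r \<in> {1..2}" for r using that s by simp
  have measure_Q: "measure lebesgue (?Q r) = (r * s / 2) ^ DIM('a) * measure lebesgue unit_box"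
    if "r \<in> {1..2}" for r
    unfolding grown_child_def using measure_subbox[OF pos[OF that]] .
  have "\<delta> * measure lebesgue (?Q 1) \<le> measure lebesgue (H \<inter> ?Q 2 - E)"
  proof (rule halo_gain_growing_family)
    show "continuous_on {1..2} (\<lambda>r. measure lebesgue (?Q r))"
      using measure_Q by (subst continuous_on_cong[OF refl]) (auto intro!: continuous_intros)
    show "?Q r \<in> fmeasurable lebesgue" if "r \<in> {1..2}" for r
      unfolding grown_child_def using subbox_fmeasurable[OF pos[OF that]] .
    show "?Q r \<subseteq> ?Q r'" if "r \<le> r'" for r r'
      using grown_child_mono[OF s that] .
    show "?Q r \<subseteq> H" if "r \<in> {1..2}" "(1 - \<delta>) * measure lebesgue (?Q r) < measure lebesgue (E \<inter> ?Q r)" for r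
      using heavy_subset_H[OF pos[OF that(1)]] that(2) unfolding grown_child_def heavy_def by blast
  qed (use E H_sets \<delta> light heavy_child in \<open>auto simp: grown_child_1 grown_child_2 heavy_def\<close>)
  moreover have "measure lebesgue (?Q 1) = measure lebesgue (subbox p s) / 2 ^ DIM('a)"
    using measure_Q[of 1] measure_subbox[OF s, of p] by (simp add: power_divide)
  ultimately show ?thesis by (simp add: grown_child_2)
qed

text \<open>Each stop contributes the
  gain of halo_gain; otherwise the estimate is summed over the (all light) children.\<close>
lemma stop_set_estimate:
  assumes "s > 0" "\<not> heavy p s"
  shows "(1 + \<delta> / 2 ^ DIM('a)) * measure lebesgue (E \<inter> stop_set k p s) \<le> measure lebesgue (H \<inter> subbox p s)"
  using assms
proof (induction k arbitrary: p s)
  case (Suc k)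
  let ?c = "\<delta> / 2 ^ DIM('a)"
  have s: "s > 0" and s2: "s/2 > 0" using Suc.prems by auto
  have ES_sets: "E \<inter> stop_set k q r \<in> sets lebesgue" if "r > 0" for k q r
    using stop_set_sets[OF that] E by blast
  show ?case
  proof (cases "\<exists>J\<in>Pow Basis. heavy (child p s J) (s/2)")
    case True
    then obtain J where J: "heavy (child p s J) (s/2)" by blast
    have HBf: "H \<inter> subbox p s \<inter> E \<in> fmeasurable lebesgue"
      using fmeasurable_Int_fmeasurable[OF H_Int_subbox_fmeasurable[OF s] E] .
    have "E \<inter> stop_set (Suc k) p s \<subseteq> H \<inter> subbox p s \<inter> E"
      using stop_set_subset[OF s, of "Suc k" p] by blast
    then have ES: "measure lebesgue (E \<inter> stop_set (Suc k) p s) \<le> measure lebesgue (H \<inter> subbox p s \<inter> E)"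
      using ES_sets[OF s] HBf by (rule measure_mono_fmeasurable)
    have "measure lebesgue (H \<inter> subbox p s \<inter> E) \<le> measure lebesgue (subbox p s)"
      using HBf subbox_fmeasurable[OF s] by (intro measure_mono_fmeasurable) auto
    then have "?c * measure lebesgue (E \<inter> stop_set (Suc k) p s) \<le> ?c * measure lebesgue (subbox p s)"
      using ES \<delta> by (intro mult_left_mono) auto
    also have "\<dots> \<le> measure lebesgue (H \<inter> subbox p s - E)"
      using halo_gain[OF s Suc.prems(2) J] by simp
    finally show ?thesis
      using ES measure_Int_Diff_split[OF H_Int_subbox_fmeasurable[OF s] E] by (simp add: algebra_simps)
  next
    case False
    then have "stop_set (Suc k) p s = (\<Union>J\<in>Pow Basis. stop_set k (child p s J) (s/2))"
      by (auto simp: stop_set.simps)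
    then have "measure lebesgue (E \<inter> stop_set (Suc k) p s)
        = measure lebesgue (\<Union>J\<in>Pow Basis. E \<inter> stop_set k (child p s J) (s/2))"
      by (simp only: Int_UN_distrib)
    also have "\<dots> \<le> (\<Sum>J\<in>Pow Basis. measure lebesgue (E \<inter> stop_set k (child p s J) (s/2)))"
      using ES_sets[OF s2] by (intro measure_UNION_le) auto
    finally have "(1 + ?c) * measure lebesgue (E \<inter> stop_set (Suc k) p s)
        \<le> (1 + ?c) * (\<Sum>J\<in>Pow Basis. measure lebesgue (E \<inter> stop_set k (child p s J) (s/2)))"
      using \<delta> by (intro mult_left_mono) auto
    also have "\<dots> = (\<Sum>J\<in>Pow Basis. (1 + ?c) * measure lebesgue (E \<inter> stop_set k (child p s J) (s/2)))"
      by (rule sum_distrib_left)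
    also have "\<dots> \<le> (\<Sum>J\<in>Pow Basis. measure lebesgue (H \<inter> subbox (child p s J) (s/2)))"
    proof (rule sum_mono)
      fix J :: "'a set" assume "J \<in> Pow Basis"
      then have "\<not> heavy (child p s J) (s/2)" using False by blast
      then show "(1 + ?c) * measure lebesgue (E \<inter> stop_set k (child p s J) (s/2))
          \<le> measure lebesgue (H \<inter> subbox (child p s J) (s/2))"
        using Suc.IH[OF s2] by blast
    qed
    also have "\<dots> \<le> measure lebesgue (H \<inter> subbox p s)"
      using sum_children_measure_le[OF H_sets s] .
    finally show ?thesis .
  qed
qed simp

lemma heavy_of_average:
  assumes r: "r > 0"
    and avg: "\<bar>(\<integral>y. indicator (subbox q r) y * indicator E y \<partial>lebesgue) / measure lebesgue (subbox q r) - 1\<bar> < \<delta>"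
  shows "heavy q r"
proof -
  have "(\<integral>y. indicator (subbox q r) y * indicator E y \<partial>lebesgue) = measure lebesgue (E \<inter> subbox q r)"
    by (simp add: indicator_inter_arith[symmetric] Int_commute)
  then have "1 - \<delta> < measure lebesgue (E \<inter> subbox q r) / measure lebesgue (subbox q r)"
    using avg by (simp add: abs_less_iff)
  then show ?thesis
    using measure_subbox_pos[OF r] unfolding heavy_def by (simp add: pos_less_divide_eq)
qed

text \<open>Density basis property: if the unit box is light, almost every point of E in it lies
  in a small heavy dyadic subbox, hence is caught by the stopping time.\<close>
lemma stop_set_covers_ae:
  assumes db: "density_basis B" and light: "\<not> heavy (\<lambda>_. 0) 1"
  shows "AE x in lebesgue. x \<in> E \<inter> unit_box \<longrightarrow> x \<in> (\<Union>k. stop_set k (\<lambda>_. 0) 1)"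
proof -
  have "(indicator E :: 'a \<Rightarrow> real) \<in> borel_measurable lebesgue" using E by simp
  moreover have "\<exists>C. AE x in lebesgue. \<bar>(indicator E x :: real)\<bar> \<le> C"
    by (intro exI[of _ 1]) (auto simp: indicator_def)
  ultimately have "AE x in lebesgue. \<forall>e>0. \<exists>d>0. \<forall>R\<in>B. x \<in> R \<and> diameter R < d \<longrightarrow>
      \<bar>(\<integral>y. indicator R y * (indicator E y :: real) \<partial>lebesgue) / measure lebesgue R - indicator E x\<bar> < e"
    using db unfolding density_basis_def by blast
  then show ?thesis
    using AE_not_in[OF rational_coord_null]
  proof eventually_elim
    case (elim x)
    show ?case
    proof
      assume x: "x \<in> E \<inter> unit_box"
      obtain d where d: "d > 0" "\<forall>R\<in>B. x \<in> R \<and> diameter R < d \<longrightarrow>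
        \<bar>(\<integral>y. indicator R y * (indicator E y :: real) \<partial>lebesgue) / measure lebesgue R - 1\<bar> < \<delta>"
        using elim(1) \<delta> x by force
      obtain k :: nat where k: "diameter unit_box / d < 2 ^ k"
        using real_arch_pow[of 2] by auto
      obtain q r where qr: "(q, r) \<in> dyadic_desc k (\<lambda>_. 0) 1" "x \<in> subbox q r"
        using dyadic_desc_cover[of x "\<lambda>_. 0" 1 k] x elim(2) by auto
      have r: "r = 1 / 2 ^ k" "r > 0" using dyadic_desc_side[OF qr(1)] by auto
      have "diameter (subbox q r) \<le> r * diameter unit_box"
        using diameter_subbox[OF r(2)] .
      also have "\<dots> < d"
        using k d(1) unfolding r(1) by (simp add: divide_less_eq mult.commute)
      finally have "heavy q r"
        using heavy_of_average[OF r(2)] d(2) subbox_in_B[OF r(2)] qr(2) by blast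
      then show "x \<in> (\<Union>k. stop_set k (\<lambda>_. 0) 1)"
        using heavy_desc_in_stop_set[OF qr(1) _ qr(2) _ light] by auto
    qed
  qed
qed

text \<open>Key estimate: on a light box, (1 + \<delta>/2^n) |E \<inter> R| \<le> |H \<inter> R|.  Almost all of E \<inter> R is
  exhausted by the increasing stopping sets, to which stop_set_estimate applies.\<close>
lemma halo_density_gain:
  assumes db: "density_basis B" and light: "\<not> heavy (\<lambda>_. 0) 1"
  shows "(1 + \<delta> / 2 ^ DIM('a)) * measure lebesgue (E \<inter> unit_box) \<le> measure lebesgue (H \<inter> unit_box)"
proof -
  let ?c = "\<delta> / 2 ^ DIM('a)"
  define U where "U = (\<Union>k. E \<inter> stop_set k (\<lambda>_. 0) 1)"
  have sets: "E \<inter> stop_set k (\<lambda>_. 0) 1 \<in> sets lebesgue" for k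
    using stop_set_sets[OF zero_less_one] E by blast
  have "U \<subseteq> unit_box" unfolding U_def using stop_set_subset[of 1] by auto
  moreover have "U \<in> sets lebesgue" unfolding U_def using sets by (intro sets.countable_UN) auto
  ultimately have Uf: "U \<in> fmeasurable lebesgue"
    by (intro fmeasurableI2[OF subbox_fmeasurable[of 1]]) auto
  have ERf: "E \<inter> unit_box \<in> fmeasurable lebesgue"
    using fmeasurable_Int_fmeasurable[OF subbox_fmeasurable[of 1] E] by (simp add: Int_commute)
  have "emeasure lebesgue (E \<inter> unit_box) \<le> emeasure lebesgue U"
    using stop_set_covers_ae[OF db light] Uf unfolding U_def
    by (intro emeasure_mono_AE) (auto dest: fmeasurableD)
  then have cover: "measure lebesgue (E \<inter> unit_box) \<le> measure lebesgue U"
    using ERf Uf by (simp add: emeasure_eq_measure2 ennreal_le_iff)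
  have "(\<lambda>k. measure lebesgue (E \<inter> stop_set k (\<lambda>_. 0) 1)) \<longlonglongrightarrow> measure lebesgue U"
    unfolding U_def using sets fmeasurableD2[OF Uf] stop_set_incseq[of "\<lambda>_. 0" 1]
    by (intro Lim_measure_incseq) (auto simp: U_def incseq_def)
  then have "(\<lambda>k. (1 + ?c) * measure lebesgue (E \<inter> stop_set k (\<lambda>_. 0) 1)) \<longlonglongrightarrow> (1 + ?c) * measure lebesgue U"
    by (intro tendsto_mult_left)
  then have "(1 + ?c) * measure lebesgue U \<le> measure lebesgue (H \<inter> unit_box)"
    using stop_set_estimate[OF zero_less_one light] by (intro LIMSEQ_le_const2) auto
  moreover have "(1 + ?c) * measure lebesgue (E \<inter> unit_box) \<le> (1 + ?c) * measure lebesgue U"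
    using cover \<delta> by (intro mult_left_mono) auto
  ultimately show ?thesis by linarith
qed

end

section \<open>The halo inclusion and the corollary\<close>

lemma obtain_rect_frame:
  fixes B :: "'a::euclidean_space set set"
  assumes "is_basis B" "homothecy_invariant B" "R \<in> B" "rect_parallelepiped R"
  obtains u a b where "rect_frame B u a b" "R = {x. \<forall>i\<in>Basis. a i < x \<bullet> u i \<and> x \<bullet> u i < b i}"
  using assms unfolding rect_parallelepiped_def rect_frame_def by auto

lemma basis_measure_pos:
  fixes B :: "'a::euclidean_space set set"
  assumes B: "is_basis B" "homothecy_invariant B" and rect: "\<forall>R\<in>B. rect_parallelepiped R"
    and R: "R \<in> B"
  shows "measure lebesgue R > 0"
proof -
  obtain u a b where frame: "rect_frame B u a b" and "R = {x. \<forall>i\<in>Basis. a i < x \<bullet> u i \<and> x \<bullet> u i < b i}"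
    using obtain_rect_frame[OF B R] rect R by blast
  then show ?thesis
    using rect_frame.measure_unit_box_pos[OF frame] rect_frame.unit_box_eq[OF frame] by simp
qed

text \<open>The halo inclusion (1): a basis rectangle R witnessing x \<in> halo \<alpha> E is either heavy
  (then R \<subseteq> H) or light (then halo_density_gain enlarges the density by 1 + \<delta>/2^n).\<close>
lemma halo_inclusion:
  fixes B :: "'a::euclidean_space set set"
  assumes B: "is_basis B" "homothecy_invariant B" and rect: "\<forall>R\<in>B. rect_parallelepiped R"
    and db: "density_basis B" and E: "E \<in> sets lebesgue"
    and \<alpha>: "0 \<le> \<alpha>" "\<alpha> * (1 + \<delta> / 2 ^ DIM('a)) < 1" and \<delta>: "0 < \<delta>" "\<delta> < 1"
  shows "halo B \<alpha> E \<subseteq> halo B (\<alpha> * (1 + \<delta> / 2 ^ DIM('a))) (halo B (1 - \<delta>) E)"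
proof
  let ?c = "\<delta> / 2 ^ DIM('a)"
  let ?H = "halo B (1 - \<delta>) E"
  fix x assume "x \<in> halo B \<alpha> E"
  then obtain R where R: "R \<in> B" "x \<in> R" "\<alpha> * measure lebesgue R < measure lebesgue (E \<inter> R)"
    using halo_iff[OF B(1) E \<alpha>(1)] by auto
  obtain u a b where frame: "rect_frame B u a b" and R_eq: "R = {x. \<forall>i\<in>Basis. a i < x \<bullet> u i \<and> x \<bullet> u i < b i}"
    using obtain_rect_frame[OF B R(1)] rect R(1) by blast
  interpret stopping_time B u a b E \<delta>
    using frame E \<delta> by (simp add: stopping_time_def stopping_time_axioms_def)
  have R_unit: "R = unit_box" using R_eq unit_box_eq by simp
  have "\<alpha> * (1 + ?c) * measure lebesgue R < measure lebesgue (?H \<inter> R)"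
  proof (cases "heavy (\<lambda>_. 0) 1")
    case True
    then have "?H \<inter> R = R" using heavy_subset_H[of 1] R_unit by auto
    then show ?thesis using \<alpha>(2) measure_unit_box_pos R_unit by simp
  next
    case False
    have "\<alpha> * (1 + ?c) * measure lebesgue R = (1 + ?c) * (\<alpha> * measure lebesgue R)"
      by simp
    also have "\<dots> < (1 + ?c) * measure lebesgue (E \<inter> R)"
      using R(3) by (rule mult_strict_left_mono) (use \<delta> in \<open>simp add: add_pos_pos\<close>)
    also have "\<dots> \<le> measure lebesgue (?H \<inter> R)"
      using halo_density_gain[OF db False] R_unit by simp
    finally show ?thesis .
  qed
  then show "x \<in> halo B (\<alpha> * (1 + ?c)) ?H"
    using halo_iff[OF B(1) H_sets, of "\<alpha> * (1 + ?c)"] R(1,2) \<alpha>(1) \<delta> by auto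
qed

lemma enlarged_level_less_one:
  fixes \<alpha> \<delta> :: real
  assumes "0 < \<alpha>" "0 < \<delta>" "\<delta> < 1 - \<alpha>"
  shows "\<alpha> * (1 + \<delta> / 2 ^ n) < 1"
proof -
  have "\<delta> / 2 ^ n \<le> \<delta>" using assms(2) by (simp add: divide_le_eq)
  then have "\<alpha> * (\<delta> / 2 ^ n) \<le> \<alpha> * \<delta>"
    using assms(1) by (intro mult_left_mono) auto
  moreover have "\<alpha> * (1 + \<delta> / 2 ^ n) = \<alpha> + \<alpha> * (\<delta> / 2 ^ n)"
    by (simp add: algebra_simps)
  ultimately have "\<alpha> * (1 + \<delta> / 2 ^ n) \<le> \<alpha> + \<alpha> * \<delta>"
    by linarith
  also have "\<alpha> * \<delta> < \<delta>" using assms by simp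
  finally show ?thesis using assms(3) by simp
qed

theorem corollary1:
  fixes \<B> :: "'a::euclidean_space set set" and \<alpha> \<delta> :: real
  assumes "is_basis \<B>"
    and "\<forall>R\<in>\<B>. rect_parallelepiped R"
    and "homothecy_invariant \<B>"
    and "density_basis \<B>"
    and "0 < \<alpha>" "\<alpha> < 1"
    and "0 < \<delta>" "\<delta> < 1 - \<alpha>"
  shows "tauberian_const \<B> \<alpha>
           \<le> tauberian_const \<B> (\<alpha> * (1 + \<delta> / 2 ^ DIM('a))) * tauberian_const \<B> (1 - \<delta>)"
proof -
  have level: "\<alpha> * (1 + \<delta> / 2 ^ DIM('a)) < 1"
    using enlarged_level_less_one assms(5,7,8) .
  have "\<forall>R\<in>\<B>. 0 < measure lebesgue R"
    using basis_measure_pos assms(1-3) by blast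
  moreover have "halo \<B> \<alpha> E \<subseteq> halo \<B> (\<alpha> * (1 + \<delta> / 2 ^ DIM('a))) (halo \<B> (1 - \<delta>) E)"
    if "E \<in> sets lebesgue" for E
    using halo_inclusion[OF assms(1,3,2,4) that _ level] assms(5-8) by simp
  ultimately show ?thesis
    using tauberian_const_compose[OF assms(1)] level assms(5-8) by simp
qed

end
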